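(* Let $A=(a_{nk})$ be a nonnegative regular summability matrix and let $(q_n)_{n\in\mathbb{N}}$ be a sequence with $0<q_n<1$ for all $n$, $st_A\text{-}\lim_n q_n^{\,n}=1$ and $st_A\text{-}\lim_n \frac{1}{[n]_{q_n}}=0$. Then for every continuous $f:[0,1]\to\mathbb{R}_+$, $$st_A\text{-}\lim_n\left(\sup_{x\in[0,1]}\left|B^{(M)}_{n,q_n}(f)(x)-f(x)\right|\right)=0.$$
   Context: For $q\in(0,1)$ and a nonnegative integer $m$, $[m]_q=\frac{1-q^m}{1-q}$; $[m]_q!=[m]_q[m-1]_q\cdots[1]_q$ for $m\ge1$, $[0]_q!=1$; $\left[\begin{smallmatrix} n\\ k\end{smallmatrix}\right]_q=\frac{[n]_q!}{[k]_q![n-k]_q!}$. For $x\in[0,1]$, $p_{n,k}(x;q)=\left[\begin{smallmatrix} n\\ k\end{smallmatrix}\right]_q x^k\prod_{s=0}^{n-k-1}(1-q^s x)$, and $$B^{(M)}_{n,q}(f)(x)=\frac{\bigvee_{k=0}^{n}p_{n,k}(x;q)\,f\!\left(\frac{[k]_q}{[n]_q}\right)}{\bigvee_{k=0}^{n}p_{n,k}(x;q)},$$ with $\bigvee$ the maximum. A matrix $A=(a_{nk})$ is regular if $\lim_n\sum_k a_{nk}x_k=L$ whenever $\lim_k x_k=L$. For a nonnegative regular $A$, a real sequence $(x_k)$ is $A$-statistically convergent to $L$, written $st_A\text{-}\lim x=L$, if for every $\varepsilon>0$, $\lim_n\sum_{k:|x_k-L|\ge\varepsilon}a_{nk}=0$.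 *)

theory Defs
  imports Complex_Main
begin

definition qint :: "real \<Rightarrow> nat \<Rightarrow> real" where
  "qint q m = (1 - q ^ m) / (1 - q)"

definition qfact :: "real \<Rightarrow> nat \<Rightarrow> real" where
  "qfact q m = (\<Prod>i\<in>{1..m}. qint q i)"

definition qbinom :: "real \<Rightarrow> nat \<Rightarrow> nat \<Rightarrow> real" where
  "qbinom q n k = qfact q n / (qfact q k * qfact q (n - k))"

definition pnk :: "real \<Rightarrow> nat \<Rightarrow> nat \<Rightarrow> real \<Rightarrow> real" where
  "pnk q n k x = qbinom q n k * x ^ k * (\<Prod>s<n - k. (1 - q ^ s * x))"

definition max_product_bernstein :: "real \<Rightarrow> nat \<Rightarrow> (real \<Rightarrow> real) \<Rightarrow> real \<Rightarrow> real" where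
  "max_product_bernstein q n f x =
     Max ((\<lambda>k. pnk q n k x * f (qint q k / qint q n)) ` {0..n})
     / Max ((\<lambda>k. pnk q n k x) ` {0..n})"

definition regular_matrix :: "(nat \<Rightarrow> nat \<Rightarrow> real) \<Rightarrow> bool" where
  "regular_matrix a \<longleftrightarrow>
     (\<forall>x L. x \<longlonglongrightarrow> L \<longrightarrow>
        (\<forall>n. summable (\<lambda>k. a n k * x k)) \<and> (\<lambda>n. \<Sum>k. a n k * x k) \<longlonglongrightarrow> L)"

definition nonneg_matrix :: "(nat \<Rightarrow> nat \<Rightarrow> real) \<Rightarrow> bool" where
  "nonneg_matrix a \<longleftrightarrow> (\<forall>n k. 0 \<le> a n k)"

definition stat_lim :: "(nat \<Rightarrow> nat \<Rightarrow> real) \<Rightarrow> (nat \<Rightarrow> real) \<Rightarrow> real \<Rightarrow> bool" where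
  "stat_lim a x L \<longleftrightarrow>
     (\<forall>\<epsilon>>0. (\<lambda>n. \<Sum>k. if \<bar>x k - L\<bar> \<ge> \<epsilon> then a n k else 0) \<longlonglongrightarrow> 0)"

end

theory Submission
  imports Defs "HOL-Analysis.Analysis"
begin

(* Fix x and write p_k = p_{n,k}(x;q), with nodes v_k = [k]_q/[n]_q spaced at most 1/[n]_q apart.
   Consecutive basis values satisfy p_{k+1}/p_k = [n-k] x / ([k+1] (1 - q^(n-k-1) x)). Once
   q^n >= 1 - d/4, this ratio is at most 1 - d/4 for nodes right of x + d/2, and its inverse is
   at most 1 - d/4 for nodes left of x - d/2. Walking from x to a node at distance >= d therefore
   passes about d [n]_q / 2 contracting steps, so far nodes carry weight at most (1 - d/4)^T times
   the maximal weight, with T large when 1/[n]_q is small. Since the max-product operator is a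
   weighted maximum divided by the maximal weight, uniform continuity of f gives
   sup |B f - f| <= eps as soon as q^n and 1/[n]_q are eta-close to 1 and 0. The indices violating
   either closeness condition have A-density zero, hence so do those with error >= eps. *)

section \<open>Statistical convergence\<close>

definition density_zero :: "(nat \<Rightarrow> nat \<Rightarrow> real) \<Rightarrow> (nat \<Rightarrow> bool) \<Rightarrow> bool" where
  "density_zero a P \<longleftrightarrow> (\<lambda>n. \<Sum>k. if P k then a n k else 0) \<longlonglongrightarrow> 0"

lemma stat_lim_iff_density_zero:
  "stat_lim a x L \<longleftrightarrow> (\<forall>\<epsilon>>0. density_zero a (\<lambda>k. \<epsilon> \<le> \<bar>x k - L\<bar>))"
  by (simp add: stat_lim_def density_zero_def)

lemma regular_matrix_summable_row:
  assumes "regular_matrix a"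
  shows "summable (\<lambda>k. a n k)"
proof -
  have "(\<lambda>k. 1 :: real) \<longlonglongrightarrow> 1"
    by simp
  then have "summable (\<lambda>k. a n k * 1)"
    using assms unfolding regular_matrix_def by blast
  then show ?thesis
    by simp
qed

lemma regular_matrix_summable_restrict:
  assumes "regular_matrix a" "nonneg_matrix a"
  shows "summable (\<lambda>k. if P k then a n k else 0)"
  by (rule summable_comparison_test[OF _ regular_matrix_summable_row[OF assms(1)]])
    (use assms(2) in \<open>auto simp: nonneg_matrix_def\<close>)

lemma density_zero_mono:
  assumes "regular_matrix a" "nonneg_matrix a" "\<And>k. P k \<Longrightarrow> Q k" "density_zero a Q"
  shows "density_zero a P"
  unfolding density_zero_def
proof (rule tendsto_sandwich[OF _ _ tendsto_const assms(4)[unfolded density_zero_def]])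
  show "\<forall>\<^sub>F n in sequentially. 0 \<le> (\<Sum>k. if P k then a n k else 0)"
    using assms(2) by (intro always_eventually allI suminf_nonneg
        regular_matrix_summable_restrict[OF assms(1,2)]) (auto simp: nonneg_matrix_def)
  show "\<forall>\<^sub>F n in sequentially. (\<Sum>k. if P k then a n k else 0) \<le> (\<Sum>k. if Q k then a n k else 0)"
    using assms by (intro always_eventually allI suminf_le
        regular_matrix_summable_restrict[OF assms(1,2)]) (auto simp: nonneg_matrix_def)
qed

lemma density_zero_disj:
  assumes "regular_matrix a" "nonneg_matrix a" "density_zero a P" "density_zero a Q"
  shows "density_zero a (\<lambda>k. P k \<or> Q k)"
  unfolding density_zero_def
proof (rule tendsto_sandwich[OF _ _ tendsto_const])
  note summable = regular_matrix_summable_restrict[OF assms(1,2)]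
  show "\<forall>\<^sub>F n in sequentially. 0 \<le> (\<Sum>k. if P k \<or> Q k then a n k else 0)"
    using assms(2) by (intro always_eventually allI suminf_nonneg summable)
      (auto simp: nonneg_matrix_def)
  show "\<forall>\<^sub>F n in sequentially. (\<Sum>k. if P k \<or> Q k then a n k else 0) \<le>
      (\<Sum>k. if P k then a n k else 0) + (\<Sum>k. if Q k then a n k else 0)"
  proof (intro always_eventually allI)
    fix n
    have "(\<Sum>k. if P k \<or> Q k then a n k else 0)
        \<le> (\<Sum>k. (if P k then a n k else 0) + (if Q k then a n k else 0))"
      using assms(2) by (intro suminf_le summable_add summable) (auto simp: nonneg_matrix_def)
    also have "\<dots> = (\<Sum>k. if P k then a n k else 0) + (\<Sum>k. if Q k then a n k else 0)"
      by (rule suminf_add[OF summable summable, symmetric])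
    finally show "(\<Sum>k. if P k \<or> Q k then a n k else 0) \<le>
      (\<Sum>k. if P k then a n k else 0) + (\<Sum>k. if Q k then a n k else 0)" .
  qed
  show "(\<lambda>n. (\<Sum>k. if P k then a n k else 0) + (\<Sum>k. if Q k then a n k else 0)) \<longlonglongrightarrow> 0"
    using tendsto_add[OF assms(3,4)[unfolded density_zero_def]] by simp
qed

lemma density_zero_singleton:
  assumes "regular_matrix a"
  shows "density_zero a (\<lambda>k. k = m)"
proof -
  have "(\<lambda>k. if k = m then 1 else 0 :: real) \<longlonglongrightarrow> 0"
    by (rule tendsto_eventually) (auto simp: eventually_sequentially intro: exI[of _ "Suc m"])
  then have "(\<lambda>n. \<Sum>k. a n k * (if k = m then 1 else 0)) \<longlonglongrightarrow> 0"
    using assms unfolding regular_matrix_def by blast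
  moreover have "(\<lambda>k. a n k * (if k = m then 1 else 0)) = (\<lambda>k. if k = m then a n k else 0)" for n
    by auto
  ultimately show ?thesis
    unfolding density_zero_def by simp
qed

section \<open>q-integers and the basis polynomials\<close>

lemma qint_0 [simp]: "qint q 0 = 0"
  by (simp add: qint_def)

lemma qint_1 [simp]: "q \<noteq> 1 \<Longrightarrow> qint q (Suc 0) = 1"
  by (simp add: qint_def)

lemma qint_Suc: "q \<noteq> 1 \<Longrightarrow> qint q (Suc i) = qint q i + q ^ i"
  unfolding qint_def by (simp add: field_simps)

lemma qint_add: "q \<noteq> 1 \<Longrightarrow> qint q (i + j) = qint q i + q ^ i * qint q j"
  unfolding qint_def by (simp add: field_simps power_add)

lemma qint_nonneg: "0 < q \<Longrightarrow> q < 1 \<Longrightarrow> 0 \<le> qint q i"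
  unfolding qint_def by (simp add: power_le_one)

lemma qint_pos: "0 < q \<Longrightarrow> q < 1 \<Longrightarrow> 0 < i \<Longrightarrow> 0 < qint q i"
  unfolding qint_def by (simp add: power_less_one_iff)

lemma qint_mono: "0 < q \<Longrightarrow> q < 1 \<Longrightarrow> i \<le> j \<Longrightarrow> qint q i \<le> qint q j"
  unfolding qint_def by (intro divide_right_mono) (auto intro: power_decreasing)

lemma qint_Suc_le: "0 < q \<Longrightarrow> q < 1 \<Longrightarrow> qint q (Suc i) \<le> qint q i + 1"
  by (simp add: qint_Suc power_le_one)

lemma qfact_0 [simp]: "qfact q 0 = 1"
  by (simp add: qfact_def)

lemma qfact_Suc: "qfact q (Suc m) = qfact q m * qint q (Suc m)"
  unfolding qfact_def by (simp add: prod.nat_ivl_Suc')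

lemma qfact_pos: "0 < q \<Longrightarrow> q < 1 \<Longrightarrow> 0 < qfact q m"
  by (induction m) (auto simp: qfact_Suc qint_pos)

lemma qbinom_0 [simp]: "0 < q \<Longrightarrow> q < 1 \<Longrightarrow> qbinom q n 0 = 1"
  unfolding qbinom_def using qfact_pos[of q n] by simp

lemma qbinom_self [simp]: "0 < q \<Longrightarrow> q < 1 \<Longrightarrow> qbinom q n n = 1"
  unfolding qbinom_def using qfact_pos[of q n] by simp

lemma qbinom_nonneg: "0 < q \<Longrightarrow> q < 1 \<Longrightarrow> 0 \<le> qbinom q n k"
  unfolding qbinom_def by (simp add: qfact_pos less_imp_le)

lemma qbinom_Suc_mult:
  assumes "0 < q" "q < 1" "i < n"
  shows "qbinom q n (Suc i) * qint q (Suc i) = qbinom q n i * qint q (n - i)"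
proof -
  obtain m where m: "n - i = Suc m" "n - Suc i = m"
    using assms by (metis Suc_diff_Suc)
  have "0 < qfact q i" "0 < qfact q m" "0 < qint q (Suc i)" "0 < qint q (Suc m)"
    using assms by (auto simp: qfact_pos qint_pos)
  then show ?thesis
    unfolding qbinom_def m qfact_Suc by (simp add: field_simps)
qed

lemma pnk_Suc_mult:
  assumes "0 < q" "q < 1" "i < n"
  shows "pnk q n (Suc i) x * (qint q (Suc i) * (1 - q ^ (n - Suc i) * x))
       = pnk q n i x * (qint q (n - i) * x)"
proof -
  obtain m where m: "n - i = Suc m" "n - Suc i = m"
    using assms by (metis Suc_diff_Suc)
  have "pnk q n (Suc i) x * (qint q (Suc i) * (1 - q ^ (n - Suc i) * x))
      = (qbinom q n (Suc i) * qint q (Suc i)) * x ^ Suc i * (\<Prod>s<Suc m. 1 - q ^ s * x)"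
    unfolding pnk_def m by (simp add: algebra_simps)
  also have "\<dots> = pnk q n i x * (qint q (n - i) * x)"
    unfolding pnk_def m qbinom_Suc_mult[OF assms] by (simp add: algebra_simps m)
  finally show ?thesis .
qed

lemma one_minus_qpow_mult_ge:
  fixes q x :: real
  shows "0 < q \<Longrightarrow> q < 1 \<Longrightarrow> 0 \<le> x \<Longrightarrow> 1 - x \<le> 1 - q ^ s * x"
  using mult_right_mono[of "q ^ s" 1 x] by (simp add: power_le_one)

lemma pnk_nonneg:
  assumes "0 < q" "q < 1" "0 \<le> x" "x \<le> 1"
  shows "0 \<le> pnk q n k x"
proof -
  have "0 \<le> (\<Prod>s<n - k. 1 - q ^ s * x)"
    using assms(4)
    by (intro prod_nonneg order_trans[OF _ one_minus_qpow_mult_ge[OF assms(1-3)]]) auto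
  then show ?thesis
    unfolding pnk_def using assms by (simp add: qbinom_nonneg)
qed

lemma Max_pnk_pos:
  assumes "0 < q" "q < 1" "0 \<le> x" "x \<le> 1"
  shows "0 < Max ((\<lambda>k. pnk q n k x) ` {0..n})"
proof -
  have "\<exists>k\<in>{0..n}. 0 < pnk q n k x"
  proof (cases "x < 1")
    case True
    have "0 < (\<Prod>s<n. 1 - q ^ s * x)"
      using True
      by (intro prod_pos less_le_trans[OF _ one_minus_qpow_mult_ge[OF assms(1-3)]]) auto
    then have "0 < pnk q n 0 x"
      unfolding pnk_def using assms by simp
    then show ?thesis by auto
  next
    case False
    then have "0 < pnk q n n x"
      unfolding pnk_def using assms by simp
    then show ?thesis by auto
  qed
  then show ?thesis
    by (auto simp: Max_gr_iff)
qed

section \<open>Geometric decay of the basis away from x\<close>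

lemma ratio_ineq_right_of_node:
  fixes N I x d :: real
  assumes "0 \<le> I" "I \<le> N" "N * (x + d/2) \<le> I" "0 \<le> x" "0 \<le> d"
  shows "(N - I) * x \<le> (1 - d/2) * (I * (1 - x))"
proof -
  have "I * (1 - x) \<le> N"
    using assms mult_left_le[of "1 - x" I] by simp
  then have "d/2 * (I * (1 - x)) \<le> d/2 * N"
    using assms by (intro mult_left_mono) auto
  moreover have "(N - I) * x \<le> I * (1 - x) - d/2 * N"
    using assms by (simp add: algebra_simps)
  ultimately show ?thesis
    by (simp add: left_diff_distrib)
qed

lemma ratio_ineq_left_of_node:
  fixes N J x d t :: real
  assumes "0 \<le> J" "J \<le> N" "J \<le> N * (x - d/2)" "0 \<le> x" "x \<le> 1" "0 \<le> d"
    "1 - d/4 \<le> t" "t \<le> 1"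
  shows "J * (1 - t * x) \<le> (1 - d/4) * ((N - J) * x)"
proof -
  have "(1 - t) * x \<le> d/4"
    using assms mult_mono[of "1 - t" "d/4" x 1] by simp
  then have "J * ((1 - t) * x) \<le> N * (d/4)"
    using assms by (intro mult_mono) auto
  moreover have "(N - J) * x \<le> N"
    using assms mult_mono[of "N - J" N x 1] by simp
  then have "d/4 * ((N - J) * x) \<le> d/4 * N"
    using assms by (intro mult_left_mono) auto
  moreover have "J * (1 - x) \<le> (N - J) * x - N * (d/2)"
    using assms by (simp add: algebra_simps)
  ultimately show ?thesis
    by (simp add: algebra_simps)
qed

lemma le_mult_of_ratio:
  fixes p p' D E r :: real
  assumes "p' * D = p * E" "E \<le> r * D" "0 < D" "0 \<le> p"
  shows "p' \<le> r * p"
proof -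
  have "p' * D \<le> (r * p) * D"
    using assms mult_left_mono[OF assms(2) assms(4)] by (simp add: ac_simps)
  then show ?thesis
    using assms(3) by simp
qed

(* The identity q^i [n-i] = [n] - [i] reduces the ratio bound to ratio_ineq_right_of_node;
   the surplus factor q^i >= 1 - d/4 is absorbed by (1 - d/4)^2 >= 1 - d/2. *)
lemma pnk_Suc_le_right:
  assumes q: "0 < q" "q < 1" and i: "i < n" and x: "0 \<le> x" "x \<le> 1"
    and d: "0 < d" and qn: "1 - d/4 \<le> q ^ n"
    and right: "qint q n * (x + d/2) \<le> qint q i"
  shows "pnk q n (Suc i) x \<le> (1 - d/4) * pnk q n i x"
proof -
  define N I where "N = qint q n" and "I = qint q i"
  define D where "D = qint q (Suc i) * (1 - q ^ (n - Suc i) * x)"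
  have I: "0 \<le> I" "I \<le> N"
    using q i by (auto simp: N_def I_def qint_nonneg qint_mono)
  have "0 < N"
    using q i by (simp add: N_def qint_pos)
  moreover have "N * (x + d/2) \<le> N * 1"
    using I right by (simp add: N_def I_def)
  ultimately have xd: "x + d/2 \<le> 1"
    by (simp add: mult_le_cancel_left_pos)
  then have x1: "0 < 1 - x"
    using d by simp
  have qi: "1 - d/4 \<le> q ^ i"
    using qn power_decreasing[of i n q] q i by linarith
  have "I * (1 - x) \<le> D"
    unfolding D_def I_def
    using one_minus_qpow_mult_ge[OF q x(1)] qint_mono[OF q, of i "Suc i"] x1 qint_nonneg[OF q]
    by (intro mult_mono) auto
  have "q ^ i * (qint q (n - i) * x) = (N - I) * x"
    using qint_add[of q i "n - i"] q i by (simp add: N_def I_def algebra_simps)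
  also have "\<dots> \<le> (1 - d/2) * (I * (1 - x))"
    using ratio_ineq_right_of_node[OF I] right x d by (simp add: N_def I_def)
  also have "\<dots> \<le> q ^ i * ((1 - d/4) * (I * (1 - x)))"
  proof -
    have "1 - d/2 \<le> (1 - d/4) * (1 - d/4)"
      by (simp add: algebra_simps)
    also have "\<dots> \<le> (1 - d/4) * q ^ i"
      using qi xd x by (intro mult_left_mono) auto
    finally show ?thesis
      using I x1 mult_right_mono[of "1 - d/2" "(1 - d/4) * q ^ i" "I * (1 - x)"]
      by (simp add: ac_simps)
  qed
  finally have "qint q (n - i) * x \<le> (1 - d/4) * (I * (1 - x))"
    using q by (simp add: mult_le_cancel_left_pos)
  also have "\<dots> \<le> (1 - d/4) * D"
    using \<open>I * (1 - x) \<le> D\<close> xd x by (intro mult_left_mono) auto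
  finally have "qint q (n - i) * x \<le> (1 - d/4) * D" .
  moreover have "0 < D"
    unfolding D_def using one_minus_qpow_mult_ge[OF q x(1), of "n - Suc i"] x1 q
    by (intro mult_pos_pos) (auto simp: qint_pos)
  ultimately show ?thesis
    using le_mult_of_ratio[OF pnk_Suc_mult[OF q i, of x, folded D_def]] pnk_nonneg[OF q x]
    by blast
qed

lemma pnk_le_Suc_left:
  assumes q: "0 < q" "q < 1" and i: "i < n" and x: "0 \<le> x" "x \<le> 1"
    and d: "0 < d" and qn: "1 - d/4 \<le> q ^ n"
    and left: "qint q (Suc i) \<le> qint q n * (x - d/2)"
  shows "pnk q n i x \<le> (1 - d/4) * pnk q n (Suc i) x"
proof -
  define N J t where "N = qint q n" and "J = qint q (Suc i)" and "t = q ^ (n - Suc i)"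
  define E where "E = qint q (n - i) * x"
  have J: "0 < J" "J \<le> N"
    using q i by (auto simp: N_def J_def qint_pos qint_mono)
  have "0 < N"
    using q i by (simp add: N_def qint_pos)
  moreover have "N * 0 < N * (x - d/2)"
    using J left by (simp add: N_def J_def)
  ultimately have xd: "d/2 < x"
    by (simp add: zero_less_mult_iff)
  have "q ^ n \<le> t"
    unfolding t_def using q by (intro power_decreasing) auto
  then have t: "1 - d/4 \<le> t" "t \<le> 1"
    using qn q by (linarith, simp add: t_def power_le_one)
  have "qint q 1 \<le> qint q (n - i)"
    using q i by (intro qint_mono) auto
  then have "1 \<le> qint q (n - i)"
    using q by simp
  moreover have "N - J = q ^ i * (qint q (n - i) - 1)"
    using qint_add[of q i "n - i"] qint_Suc[of q i] q i
    by (simp add: N_def J_def algebra_simps)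
  ultimately have "N - J \<le> qint q (n - i)"
    using mult_left_le_one_le[of "qint q (n - i) - 1" "q ^ i"] q
    by (simp add: power_le_one)
  have "J * (1 - t * x) \<le> (1 - d/4) * ((N - J) * x)"
    using ratio_ineq_left_of_node[of J N x d t] J left x d t by (simp add: N_def J_def)
  also have "\<dots> \<le> (1 - d/4) * E"
    unfolding E_def using \<open>N - J \<le> qint q (n - i)\<close> xd x
    by (intro mult_left_mono mult_right_mono) auto
  finally have "J * (1 - t * x) \<le> (1 - d/4) * E" .
  moreover have "0 < E"
    unfolding E_def using \<open>1 \<le> qint q (n - i)\<close> xd d by simp
  ultimately show ?thesis
    using le_mult_of_ratio[OF pnk_Suc_mult[OF q i, of x, folded J_def t_def E_def, symmetric]]
      pnk_nonneg[OF q x]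
    by blast
qed

lemma geometric_decay_right:
  fixes g v :: "nat \<Rightarrow> real"
  assumes step: "\<And>i. i < n \<Longrightarrow> a \<le> v i \<Longrightarrow> g (Suc i) \<le> r * g i"
    and inc: "\<And>i. i < n \<Longrightarrow> v (Suc i) \<le> v i + h"
    and "v 0 < a" "0 \<le> h" "0 \<le> r" and bound: "\<And>k. k \<le> n \<Longrightarrow> g k \<le> M"
  shows "k \<le> n \<Longrightarrow> a + real t * h \<le> v k \<Longrightarrow> g k \<le> r ^ t * M"
proof (induction t arbitrary: k)
  case 0
  then show ?case using bound by simp
next
  case (Suc t)
  have "0 \<le> real (Suc t) * h"
    using \<open>0 \<le> h\<close> by simp
  with Suc.prems have "a \<le> v k"
    by linarith
  then obtain j where j: "k = Suc j"
    using \<open>v 0 < a\<close> by (cases k) auto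
  with Suc.prems have "j < n"
    by simp
  have vj: "a + real t * h \<le> v j"
    using inc[OF \<open>j < n\<close>] Suc.prems j by (simp add: algebra_simps)
  have "0 \<le> real t * h"
    using \<open>0 \<le> h\<close> by simp
  with vj have "g k \<le> r * g j"
    using step[OF \<open>j < n\<close>] j by simp
  also have "\<dots> \<le> r * (r ^ t * M)"
    using Suc.IH[OF _ vj] \<open>j < n\<close> \<open>0 \<le> r\<close> by (simp add: mult_left_mono)
  finally show ?case
    by simp
qed

lemma geometric_decay_left:
  fixes g v :: "nat \<Rightarrow> real"
  assumes step: "\<And>i. i < n \<Longrightarrow> v (Suc i) \<le> b \<Longrightarrow> g i \<le> r * g (Suc i)"
    and inc: "\<And>i. i < n \<Longrightarrow> v (Suc i) \<le> v i + h"
    and "b < v n" "0 \<le> h" "0 \<le> r" and bound: "\<And>k. k \<le> n \<Longrightarrow> g k \<le> M"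
  shows "k \<le> n \<Longrightarrow> v k \<le> b - real t * h \<Longrightarrow> g k \<le> r ^ t * M"
proof (induction t arbitrary: k)
  case 0
  then show ?case using bound by simp
next
  case (Suc t)
  have "0 \<le> real (Suc t) * h"
    using \<open>0 \<le> h\<close> by simp
  with Suc.prems have "v k \<le> b"
    by linarith
  with Suc.prems \<open>b < v n\<close> have "k < n"
    by (cases "k = n") auto
  have vk: "v (Suc k) \<le> b - real t * h"
    using inc[OF \<open>k < n\<close>] Suc.prems by (simp add: algebra_simps)
  have "0 \<le> real t * h"
    using \<open>0 \<le> h\<close> by simp
  with vk have "g k \<le> r * g (Suc k)"
    using step[OF \<open>k < n\<close>] by simp
  also have "\<dots> \<le> r * (r ^ t * M)"
    using Suc.IH[OF _ vk] \<open>k < n\<close> \<open>0 \<le> r\<close> by (simp add: mult_left_mono)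
  finally show ?case
    by simp
qed

lemma pnk_far_node_le:
  assumes q: "0 < q" "q < 1" and n: "0 < n" and x: "0 \<le> x" "x \<le> 1"
    and d: "0 < d" "d \<le> 1" and qn: "1 - d/4 \<le> q ^ n"
    and T: "real T \<le> qint q n * (d/2)"
    and k: "k \<le> n" "d \<le> \<bar>qint q k / qint q n - x\<bar>"
  shows "pnk q n k x \<le> (1 - d/4) ^ T * Max ((\<lambda>j. pnk q n j x) ` {0..n})"
proof -
  define N where "N = qint q n"
  define v where "v i = qint q i / N" for i
  have "0 < N"
    using q n by (simp add: N_def qint_pos)
  have "v n = 1"
    using \<open>0 < N\<close> by (simp add: v_def N_def)
  have inc: "v (Suc i) \<le> v i + 1 / N" for i
    unfolding v_def using qint_Suc_le[OF q, of i] \<open>0 < N\<close>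
    by (simp add: add_divide_distrib[symmetric] divide_right_mono)
  have T_steps: "real T * (1 / N) \<le> d/2"
    using T \<open>0 < N\<close> by (simp add: N_def field_simps)
  have bound: "pnk q n j x \<le> Max ((\<lambda>j. pnk q n j x) ` {0..n})" if "j \<le> n" for j
    using that by (intro Max_ge) auto
  consider "x + d \<le> v k" | "v k \<le> x - d"
    using k by (auto simp: v_def N_def abs_if split: if_splits)
  then show ?thesis
  proof cases
    case 1
    show ?thesis
    proof (rule geometric_decay_right[where v = v and a = "x + d/2" and h = "1 / N"])
      show "pnk q n (Suc i) x \<le> (1 - d/4) * pnk q n i x" if "i < n" "x + d/2 \<le> v i" for i
        using that \<open>0 < N\<close> pnk_Suc_le_right[OF q that(1) x d(1) qn]
        by (simp add: v_def N_def pos_le_divide_eq mult.commute)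
      show "x + d/2 + real T * (1 / N) \<le> v k"
        using 1 T_steps by linarith
    qed (use inc \<open>0 < N\<close> d x bound k in \<open>auto simp: v_def\<close>)
  next
    case 2
    show ?thesis
    proof (rule geometric_decay_left[where v = v and b = "x - d/2" and h = "1 / N"])
      show "pnk q n i x \<le> (1 - d/4) * pnk q n (Suc i) x" if "i < n" "v (Suc i) \<le> x - d/2" for i
        using that \<open>0 < N\<close> pnk_le_Suc_left[OF q that(1) x d(1) qn]
        by (simp add: v_def N_def pos_divide_le_eq mult.commute)
      show "v k \<le> x - d/2 - real T * (1 / N)"
        using 2 T_steps by linarith
    qed (use inc \<open>0 < N\<close> \<open>v n = 1\<close> d x bound k in auto)
  qed
qed

section \<open>Uniform estimate for the max-product operator\<close>

lemma Max_mult_div_Max_approx: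
  fixes p y :: "nat \<Rightarrow> real"
  assumes S: "finite S" "S \<noteq> {}" and p: "\<And>k. k \<in> S \<Longrightarrow> 0 \<le> p k" and "0 \<le> c"
    and P: "P = Max (p ` S)" "0 < P"
    and close: "\<And>k. k \<in> S \<Longrightarrow> p k * \<bar>y k - c\<bar> \<le> P * e"
  shows "\<bar>Max ((\<lambda>k. p k * y k) ` S) / P - c\<bar> \<le> e"
proof -
  define Y where "Y = Max ((\<lambda>k. p k * y k) ` S)"
  have "p k * y k \<le> P * c + P * e" if k: "k \<in> S" for k
  proof -
    have "p k * c \<le> P * c"
      using S k P \<open>0 \<le> c\<close> by (simp add: mult_right_mono)
    moreover have "p k * y k \<le> p k * c + p k * \<bar>y k - c\<bar>"
      using p[OF k] by (simp flip: distrib_left add: mult_left_mono)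
    ultimately show ?thesis
      using close[OF k] by linarith
  qed
  then have upper: "Y \<le> P * c + P * e"
    unfolding Y_def using S by simp
  have "Max (p ` S) \<in> p ` S"
    using S by (intro Max_in) auto
  then obtain k0 where k0: "k0 \<in> S" "p k0 = P"
    using P(1) by auto
  have "p k0 * c - p k0 * \<bar>y k0 - c\<bar> \<le> p k0 * y k0"
    using p[OF k0(1)] by (simp flip: right_diff_distrib add: mult_left_mono)
  also have "\<dots> \<le> Y"
    unfolding Y_def using S k0 by (intro Max_ge) auto
  finally have lower: "P * c - P * e \<le> Y"
    using close[OF k0(1)] unfolding k0(2) by linarith
  have "\<bar>Y - P * c\<bar> \<le> P * e"
    using upper lower by linarith
  have "Y / P - c = (Y - P * c) / P"
    using P(2) by (simp add: diff_divide_distrib)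
  also have "\<bar>\<dots>\<bar> = \<bar>Y - P * c\<bar> / P"
    using P(2) by simp
  also have "\<dots> \<le> e"
    using \<open>\<bar>Y - P * c\<bar> \<le> P * e\<close> P(2) by (simp add: pos_divide_le_eq mult.commute)
  finally show ?thesis
    unfolding Y_def .
qed

lemma pnk_mult_node_error_le:
  assumes q: "0 < q" "q < 1" and n: "0 < n" and x: "0 \<le> x" "x \<le> 1" and k: "k \<le> n"
    and d: "0 < d" "d \<le> 1" and qn: "1 - d/4 \<le> q ^ n" and T: "real T \<le> qint q n * (d/2)"
    and near: "\<And>y. y \<in> {0..1} \<Longrightarrow> \<bar>y - x\<bar> < d \<Longrightarrow> \<bar>f y - f x\<bar> \<le> e"
    and far: "\<And>y. y \<in> {0..1} \<Longrightarrow> (1 - d/4) ^ T * \<bar>f y - f x\<bar> \<le> e"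
  shows "pnk q n k x * \<bar>f (qint q k / qint q n) - f x\<bar>
    \<le> Max ((\<lambda>j. pnk q n j x) ` {0..n}) * e"
proof -
  define P y where "P = Max ((\<lambda>j. pnk q n j x) ` {0..n})" and "y = qint q k / qint q n"
  have y: "y \<in> {0..1}"
    using k q n by (auto simp: y_def qint_nonneg qint_pos qint_mono divide_le_eq_1)
  have pk: "0 \<le> pnk q n k x" "pnk q n k x \<le> P"
    using k pnk_nonneg[OF q x] by (auto simp: P_def)
  show ?thesis
  proof (cases "\<bar>y - x\<bar> < d")
    case True
    moreover have "0 \<le> e"
      using near[of x] x d by simp
    ultimately show ?thesis
      using near[OF y] pk by (simp add: y_def P_def mult_mono)
  next
    case False
    then have "pnk q n k x \<le> (1 - d/4) ^ T * P"
      using pnk_far_node_le[OF q n x d qn T k(1)] by (simp add: y_def P_def)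
    then have "pnk q n k x * \<bar>f y - f x\<bar> \<le> ((1 - d/4) ^ T * P) * \<bar>f y - f x\<bar>"
      by (rule mult_right_mono) simp
    also have "\<dots> = P * ((1 - d/4) ^ T * \<bar>f y - f x\<bar>)"
      by simp
    also have "\<dots> \<le> P * e"
      using far[OF y] Max_pnk_pos[OF q x] by (simp add: P_def)
    finally show ?thesis
      by (simp add: y_def P_def)
  qed
qed

lemma max_product_bernstein_error_le:
  assumes q: "0 < q" "q < 1" and n: "0 < n" and x: "x \<in> {0..1}"
    and d: "0 < d" "d \<le> 1" and qn: "1 - d/4 \<le> q ^ n" and T: "real T \<le> qint q n * (d/2)"
    and f_nonneg: "\<And>y. y \<in> {0..1} \<Longrightarrow> 0 \<le> f y"
    and near: "\<And>y. y \<in> {0..1} \<Longrightarrow> \<bar>y - x\<bar> < d \<Longrightarrow> \<bar>f y - f x\<bar> \<le> e"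
    and far: "\<And>y. y \<in> {0..1} \<Longrightarrow> (1 - d/4) ^ T * \<bar>f y - f x\<bar> \<le> e"
  shows "\<bar>max_product_bernstein q n f x - f x\<bar> \<le> e"
proof -
  have x01: "0 \<le> x" "x \<le> 1"
    using x by auto
  show ?thesis
    unfolding max_product_bernstein_def
    by (rule Max_mult_div_Max_approx[OF _ _ _ f_nonneg[OF x] refl Max_pnk_pos[OF q x01]])
      (use pnk_nonneg[OF q x01]
        pnk_mult_node_error_le[where f = f and e = e, OF q n x01 _ d qn T near far] in auto)
qed

lemma max_product_bernstein_uniform_estimate:
  fixes f :: "real \<Rightarrow> real"
  assumes f: "continuous_on {0..1} f" and f_nonneg: "\<And>x. x \<in> {0..1} \<Longrightarrow> 0 \<le> f x"
    and "0 < e"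
  obtains \<eta> where "0 < \<eta>"
    "\<And>q n. 0 < q \<Longrightarrow> q < 1 \<Longrightarrow> 0 < n \<Longrightarrow> 1 - \<eta> \<le> q ^ n \<Longrightarrow> 1 / qint q n \<le> \<eta> \<Longrightarrow>
       \<bar>SUP x\<in>{0..1}. \<bar>max_product_bernstein q n f x - f x\<bar>\<bar> \<le> e"
proof -
  obtain B where B: "\<And>x. x \<in> {0..1} \<Longrightarrow> \<bar>f x\<bar> \<le> B"
    using continuous_on_compact_bound[OF compact_Icc f] by auto
  obtain d0 where "0 < d0" and d0:
    "\<And>x y. x \<in> {0..1} \<Longrightarrow> y \<in> {0..1} \<Longrightarrow> dist y x < d0 \<Longrightarrow> dist (f y) (f x) < e"
    using compact_uniformly_continuous[OF f compact_Icc] \<open>0 < e\<close>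
    unfolding uniformly_continuous_on_def by metis
  define d where "d = min d0 1"
  have d: "0 < d" "d \<le> 1" "d \<le> d0"
    using \<open>0 < d0\<close> by (auto simp: d_def)
  have "(\<lambda>T. (1 - d/4) ^ T * (2 * B)) \<longlonglongrightarrow> 0"
    using d by (intro tendsto_mult_left_zero LIMSEQ_power_zero) auto
  then have "eventually (\<lambda>T. (1 - d/4) ^ T * (2 * B) < e) sequentially"
    using \<open>0 < e\<close> by (rule order_tendstoD(2))
  then obtain T where T: "(1 - d/4) ^ T * (2 * B) < e"
    unfolding eventually_sequentially by blast
  have near: "\<bar>f y - f x\<bar> \<le> e" if "x \<in> {0..1}" "y \<in> {0..1}" "\<bar>y - x\<bar> < d" for x y
    using d0[OF that(1,2)] that(3) d by (simp add: dist_real_def)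
  have far: "(1 - d/4) ^ T * \<bar>f y - f x\<bar> \<le> e" if "x \<in> {0..1}" "y \<in> {0..1}" for x y
  proof -
    have "(1 - d/4) ^ T * \<bar>f y - f x\<bar> \<le> (1 - d/4) ^ T * (2 * B)"
      using B[OF that(1)] B[OF that(2)] d by (intro mult_left_mono) auto
    with T show ?thesis
      by linarith
  qed
  (* This eta forces both q^n >= 1 - d/4 and T <= [n]_q d/2, i.e. T node steps fit into d/2. *)
  show ?thesis
  proof (rule that[of "d / (4 * (real T + 1))"])
    show "0 < d / (4 * (real T + 1))"
      using d by simp
    fix q :: real and n :: nat
    assume q: "0 < q" "q < 1" and n: "0 < n" and qn: "1 - d / (4 * (real T + 1)) \<le> q ^ n"
      and N: "1 / qint q n \<le> d / (4 * (real T + 1))"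
    have "d / (4 * (real T + 1)) \<le> d/4"
      using d by (intro divide_left_mono) auto
    with qn have qn': "1 - d/4 \<le> q ^ n"
      by linarith
    have "4 * (real T + 1) \<le> d * qint q n"
      using N qint_pos[OF q n] d by (simp add: divide_le_eq le_divide_eq mult.commute)
    then have T': "real T \<le> qint q n * (d/2)"
      by (simp add: algebra_simps)
    show "\<bar>SUP x\<in>{0..1}. \<bar>max_product_bernstein q n f x - f x\<bar>\<bar> \<le> e"
      using near far
      by (intro cSup_abs_le)
        (auto intro!: max_product_bernstein_error_le[OF q n _ d(1,2) qn' T' f_nonneg])
  qed
qed

theorem theorem8:
  fixes a :: "nat \<Rightarrow> nat \<Rightarrow> real" and q :: "nat \<Rightarrow> real" and f :: "real \<Rightarrow> real"
  assumes "nonneg_matrix a" and "regular_matrix a"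
    and "\<And>n. 0 < q n \<and> q n < 1"
    and "stat_lim a (\<lambda>n. q n ^ n) 1"
    and "stat_lim a (\<lambda>n. 1 / qint (q n) n) 0"
    and "continuous_on {0..1} f" and "\<And>x. x \<in> {0..1} \<Longrightarrow> 0 \<le> f x"
  shows "stat_lim a
           (\<lambda>n. SUP x\<in>{0..1}. \<bar>max_product_bernstein (q n) n f x - f x\<bar>) 0"
  unfolding stat_lim_iff_density_zero
proof (intro allI impI)
  fix \<epsilon> :: real
  assume "0 < \<epsilon>"
  then obtain \<eta> where "0 < \<eta>" and estimate:
    "\<And>q n. 0 < q \<Longrightarrow> q < 1 \<Longrightarrow> 0 < n \<Longrightarrow> 1 - \<eta> \<le> q ^ n \<Longrightarrow> 1 / qint q n \<le> \<eta> \<Longrightarrow>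
       \<bar>SUP x\<in>{0..1}. \<bar>max_product_bernstein q n f x - f x\<bar>\<bar> \<le> \<epsilon> / 2"
    using max_product_bernstein_uniform_estimate[OF assms(6,7), of "\<epsilon> / 2"] by auto
  have dz_pow: "density_zero a (\<lambda>k. \<eta> \<le> \<bar>q k ^ k - 1\<bar>)"
    and dz_inv: "density_zero a (\<lambda>k. \<eta> \<le> \<bar>1 / qint (q k) k - 0\<bar>)"
    using assms(4,5) \<open>0 < \<eta>\<close> unfolding stat_lim_iff_density_zero by blast+
  (* Index 0 is exempt: q^0 = 1 and 1/[0]_q = 1/0 = 0, yet the operator of degree 0 is f(0). *)
  have bad: "density_zero a
      (\<lambda>k. k = 0 \<or> \<eta> \<le> \<bar>q k ^ k - 1\<bar> \<or> \<eta> \<le> \<bar>1 / qint (q k) k - 0\<bar>)"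
    using density_zero_disj[OF assms(2,1) density_zero_singleton[OF assms(2)]
        density_zero_disj[OF assms(2,1) dz_pow dz_inv]] .
  show "density_zero a
      (\<lambda>k. \<epsilon> \<le> \<bar>(SUP x\<in>{0..1}. \<bar>max_product_bernstein (q k) k f x - f x\<bar>) - 0\<bar>)"
  proof (rule density_zero_mono[OF assms(2,1) _ bad], rule ccontr)
    fix k
    assume large: "\<epsilon> \<le> \<bar>(SUP x\<in>{0..1}. \<bar>max_product_bernstein (q k) k f x - f x\<bar>) - 0\<bar>"
      and "\<not> (k = 0 \<or> \<eta> \<le> \<bar>q k ^ k - 1\<bar> \<or> \<eta> \<le> \<bar>1 / qint (q k) k - 0\<bar>)"
    then have "0 < k" "1 - \<eta> \<le> q k ^ k" "1 / qint (q k) k \<le> \<eta>"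
      using qint_nonneg[of "q k" k] assms(3)[of k] by auto
    then have "\<bar>SUP x\<in>{0..1}. \<bar>max_product_bernstein (q k) k f x - f x\<bar>\<bar> \<le> \<epsilon> / 2"
      using estimate assms(3)[of k] by blast
    with large \<open>0 < \<epsilon>\<close> show False
      by simp
  qed
qed

end
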